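(* Let $(\mathcal S,\mathcal A,P,R,d_0)$ be a finite episodic MDP with horizon $T$ and $\pi_\theta$ a parameterized policy satisfying the score bound described in the context. Then there exists a finite constant $L_d$ such that for all $s\in\mathcal S$ (and all $\theta$), $$\Big\|\frac{\partial}{\partial\theta}\sum_{t=1}^{T-1}\Pr(S_t=s\mid\pi=\pi_\theta)\Big\|\le L_d.$$
   Context: Setting: $\mathcal S$ is a finite set of states, $\mathcal A$ a finite set of actions, $P(s'\mid s,a)$ a transition function, $d_0$ an initial state distribution. An episode runs as follows: $S_0\sim d_0$; at each time $t$, $A_t\sim\pi_\theta(\cdot\mid S_t)$, $S_{t+1}\sim P(\cdot\mid S_t,A_t)$; the horizon is $T$. The policy $\pi_\theta(a\mid s)$ is positive and differentiable in $\theta\in\mathbb R^n$, and there is a constant $L_\pi$ such that for all $\theta$, $s\in\mathcal S$, $a\in\mathcal A$: $\big\|\frac{\partial}{\partial\theta}\ln\pi_\theta(a\mid s)\big\|\le L_\pi$. *)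

theory Defs
  imports "HOL-Analysis.Analysis"
begin

text \<open>Marginal state distribution Pr(S_t = s | \<pi>) of the Markov chain generated by
  initial distribution d0, policy \<pi> (\<pi> s a = probability of action a in state s)
  and transition kernel P (P s a s' = probability of s' after action a in s).\<close>
fun state_dist :: "('s::finite \<Rightarrow> real) \<Rightarrow> ('s \<Rightarrow> 'a::finite \<Rightarrow> 's \<Rightarrow> real)
    \<Rightarrow> ('s \<Rightarrow> 'a \<Rightarrow> real) \<Rightarrow> nat \<Rightarrow> 's \<Rightarrow> real" where
  "state_dist d0 P \<pi> 0 s = d0 s"
| "state_dist d0 P \<pi> (Suc t) s' =
     (\<Sum>s\<in>UNIV. \<Sum>a\<in>UNIV. state_dist d0 P \<pi> t s * \<pi> s a * P s a s')"

end

(*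
  Differentiating the forward recursion of Pr(S_t = s) by the product rule expresses the
  gradient at time t+1 through the gradient at time t and the policy gradients.  Since
  grad pi = pi * grad (ln pi), each policy gradient has norm at most pi * L_pi, and because
  pi(.|s), P(.|s,a) and Pr(S_t = .) are probability vectors, the sum over s of the gradient
  norms grows by at most L_pi per step.  Hence the gradient at time t has norm at most
  t * L_pi, and L_d = L_pi * (1 + ... + (T-1)) works.
*)
theory Submission
  imports Defs
begin

lemma differentiable_imp_has_gradient:
  fixes f :: "'a::euclidean_space \<Rightarrow> real"
  assumes "f differentiable (at x within S)"
  obtains g where "(f has_derivative (\<lambda>h. g \<bullet> h)) (at x within S)"
proof -
  obtain D where D: "(f has_derivative D) (at x within S)"
    using assms unfolding differentiable_def by blast
  have "D = (\<lambda>h. adjoint D 1 \<bullet> h)"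
    using adjoint_clauses(2)[OF has_derivative_linear[OF D], of 1] by auto
  with D that show ?thesis by metis
qed

lemma norm_gradient_le_of_log_gradient_bound:
  fixes f :: "'a::real_inner \<Rightarrow> real"
  assumes pos: "f x > 0"
    and f_deriv: "(f has_derivative (\<lambda>h. g \<bullet> h)) (at x within S)"
    and log_bound: "\<And>g'. ((\<lambda>y. ln (f y)) has_derivative (\<lambda>h. g' \<bullet> h)) (at x within S)
                      \<Longrightarrow> norm g' \<le> L"
  shows "norm g \<le> f x * L"
proof -
  have "((\<lambda>y. ln (f y)) has_derivative (\<lambda>h. (g \<bullet> h) * inverse (f x))) (at x within S)"
    by (rule DERIV_compose_FDERIV[OF DERIV_ln[OF pos] f_deriv])
  also have "(\<lambda>h. (g \<bullet> h) * inverse (f x)) = (\<lambda>h. (g /\<^sub>R f x) \<bullet> h)"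
    by (simp add: mult.commute)
  finally have "norm (g /\<^sub>R f x) \<le> L"
    by (rule log_bound)
  with pos show ?thesis
    by (simp add: field_simps)
qed

lemma sum_swap3:
  "(\<Sum>z\<in>C. \<Sum>x\<in>A. \<Sum>y\<in>B. f x y z) = (\<Sum>x\<in>A. \<Sum>y\<in>B. \<Sum>z\<in>C. f x y z)"
  by (subst sum.swap, rule sum.cong[OF refl], rule sum.swap)

lemma state_dist_nonneg:
  assumes "\<And>s. d0 s \<ge> 0" "\<And>s a s'. P s a s' \<ge> 0" "\<And>s a. p s a \<ge> 0"
  shows "state_dist d0 P p t s \<ge> 0"
  using assms by (induction t arbitrary: s) (simp_all add: sum_nonneg)

lemma sum_state_dist:
  assumes d0_sum: "(\<Sum>s\<in>UNIV. d0 s) = 1"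
    and P_sum: "\<And>s a. (\<Sum>s'\<in>UNIV. P s a s') = 1"
    and p_sum: "\<And>s. (\<Sum>a\<in>UNIV. p s a) = 1"
  shows "(\<Sum>s\<in>UNIV. state_dist d0 P p t s) = 1"
proof (induction t)
  case 0
  show ?case using d0_sum by simp
next
  case (Suc t)
  have "(\<Sum>s'\<in>UNIV. state_dist d0 P p (Suc t) s')
      = (\<Sum>s\<in>UNIV. \<Sum>a\<in>UNIV. \<Sum>s'\<in>UNIV. state_dist d0 P p t s * p s a * P s a s')"
    unfolding state_dist.simps by (rule sum_swap3)
  also have "\<dots> = (\<Sum>s\<in>UNIV. state_dist d0 P p t s * (\<Sum>a\<in>UNIV. p s a))"
    by (simp add: P_sum sum_distrib_left[symmetric])
  finally show ?case using Suc p_sum by simp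
qed

text \<open>The gradient of \<^term>\<open>state_dist d0 P p t s\<close> obtained by the product rule, when
  \<^term>\<open>dp s a\<close> is the gradient of the policy entry \<^term>\<open>p s a\<close>.\<close>
fun state_dist_grad :: "('s::finite \<Rightarrow> real) \<Rightarrow> ('s \<Rightarrow> 'a::finite \<Rightarrow> 's \<Rightarrow> real)
    \<Rightarrow> ('s \<Rightarrow> 'a \<Rightarrow> real) \<Rightarrow> ('s \<Rightarrow> 'a \<Rightarrow> 'v::real_vector) \<Rightarrow> nat \<Rightarrow> 's \<Rightarrow> 'v" where
  "state_dist_grad d0 P p dp 0 s = 0"
| "state_dist_grad d0 P p dp (Suc t) s' =
     (\<Sum>s\<in>UNIV. \<Sum>a\<in>UNIV. P s a s' *\<^sub>R
        (p s a *\<^sub>R state_dist_grad d0 P p dp t s + state_dist d0 P p t s *\<^sub>R dp s a))"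

lemma has_derivative_state_dist:
  fixes \<pi> :: "'v::real_inner \<Rightarrow> 's::finite \<Rightarrow> 'a::finite \<Rightarrow> real"
  assumes \<pi>_deriv: "\<And>s a. ((\<lambda>\<theta>'. \<pi> \<theta>' s a) has_derivative (\<lambda>h. dp s a \<bullet> h)) (at \<theta> within S)"
  shows "((\<lambda>\<theta>'. state_dist d0 P (\<pi> \<theta>') t s)
           has_derivative (\<lambda>h. state_dist_grad d0 P (\<pi> \<theta>) dp t s \<bullet> h)) (at \<theta> within S)"
proof (induction t arbitrary: s)
  case 0
  show ?case by simp
next
  case (Suc t)
  let ?sd = "state_dist d0 P (\<pi> \<theta>) t" and ?G = "state_dist_grad d0 P (\<pi> \<theta>) dp t"
  have "((\<lambda>\<theta>'. state_dist d0 P (\<pi> \<theta>') (Suc t) s) has_derivative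
          (\<lambda>h. \<Sum>s'\<in>UNIV. \<Sum>a\<in>UNIV. (?sd s' * (dp s' a \<bullet> h) + (?G s' \<bullet> h) * \<pi> \<theta> s' a) * P s' a s))
        (at \<theta> within S)"
    unfolding state_dist.simps
    by (intro has_derivative_sum has_derivative_mult_left has_derivative_mult Suc.IH \<pi>_deriv)
  also have "(\<lambda>h. \<Sum>s'\<in>UNIV. \<Sum>a\<in>UNIV. (?sd s' * (dp s' a \<bullet> h) + (?G s' \<bullet> h) * \<pi> \<theta> s' a) * P s' a s)
           = (\<lambda>h. state_dist_grad d0 P (\<pi> \<theta>) dp (Suc t) s \<bullet> h)"
    by (simp add: inner_sum_left algebra_simps)
  finally show ?case .
qed

lemma norm_state_dist_grad_Suc_le:
  fixes dp :: "'s::finite \<Rightarrow> 'a::finite \<Rightarrow> 'v::real_normed_vector"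
  assumes d0_nonneg: "\<And>s. d0 s \<ge> 0" and P_nonneg: "\<And>s a s'. P s a s' \<ge> 0"
    and p_nonneg: "\<And>s a. p s a \<ge> 0"
  shows "norm (state_dist_grad d0 P p dp (Suc t) s')
    \<le> (\<Sum>s\<in>UNIV. \<Sum>a\<in>UNIV. P s a s' *
          (p s a * norm (state_dist_grad d0 P p dp t s) + state_dist d0 P p t s * norm (dp s a)))"
  unfolding state_dist_grad.simps
proof (intro order.trans[OF norm_sum] sum_mono)
  fix s a
  have "state_dist d0 P p t s \<ge> 0"
    using d0_nonneg P_nonneg p_nonneg by (rule state_dist_nonneg)
  then show "norm (P s a s' *\<^sub>R (p s a *\<^sub>R state_dist_grad d0 P p dp t s + state_dist d0 P p t s *\<^sub>R dp s a))
    \<le> P s a s' * (p s a * norm (state_dist_grad d0 P p dp t s) + state_dist d0 P p t s * norm (dp s a))"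
    using P_nonneg[of s a s'] p_nonneg[of s a]
    by (auto intro!: mult_left_mono order.trans[OF norm_triangle_ineq])
qed

lemma sum_norm_state_dist_grad_le:
  fixes dp :: "'s::finite \<Rightarrow> 'a::finite \<Rightarrow> 'v::real_normed_vector"
  assumes d0_nonneg: "\<And>s. d0 s \<ge> 0" and d0_sum: "(\<Sum>s\<in>UNIV. d0 s) = 1"
    and P_nonneg: "\<And>s a s'. P s a s' \<ge> 0"
    and P_sum: "\<And>s a. (\<Sum>s'\<in>UNIV. P s a s') = 1"
    and p_nonneg: "\<And>s a. p s a \<ge> 0"
    and p_sum: "\<And>s. (\<Sum>a\<in>UNIV. p s a) = 1"
    and dp_bound: "\<And>s a. norm (dp s a) \<le> p s a * L"
  shows "(\<Sum>s\<in>UNIV. norm (state_dist_grad d0 P p dp t s)) \<le> t * L"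
proof (induction t)
  case 0
  show ?case by simp
next
  case (Suc t)
  let ?sd = "state_dist d0 P p t" and ?G = "state_dist_grad d0 P p dp t"
  have "(\<Sum>s'\<in>UNIV. norm (state_dist_grad d0 P p dp (Suc t) s'))
      \<le> (\<Sum>s'\<in>UNIV. \<Sum>s\<in>UNIV. \<Sum>a\<in>UNIV. P s a s' * (p s a * norm (?G s) + ?sd s * norm (dp s a)))"
    using d0_nonneg P_nonneg p_nonneg by (intro sum_mono norm_state_dist_grad_Suc_le)
  also have "\<dots> = (\<Sum>s\<in>UNIV. \<Sum>a\<in>UNIV. p s a * norm (?G s) + ?sd s * norm (dp s a))"
    by (simp add: sum_swap3 sum_distrib_right[symmetric] P_sum)
  also have "\<dots> \<le> (\<Sum>s\<in>UNIV. \<Sum>a\<in>UNIV. p s a * norm (?G s) + ?sd s * (p s a * L))"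
    using state_dist_nonneg[OF d0_nonneg P_nonneg p_nonneg]
    by (intro sum_mono add_left_mono mult_left_mono dp_bound)
  also have "\<dots> = (\<Sum>s\<in>UNIV. norm (?G s)) + (\<Sum>s\<in>UNIV. ?sd s) * L"
    by (simp add: sum.distrib mult.assoc[symmetric] sum_distrib_left[symmetric]
        sum_distrib_right[symmetric] p_sum)
  also have "\<dots> \<le> Suc t * L"
    using Suc sum_state_dist[OF d0_sum P_sum p_sum] by (simp add: algebra_simps)
  finally show ?case .
qed

theorem corollary2:
  fixes d0 :: "'s::finite \<Rightarrow> real"
    and P :: "'s \<Rightarrow> 'a::finite \<Rightarrow> 's \<Rightarrow> real"
    and \<pi> :: "real ^ 'n \<Rightarrow> 's \<Rightarrow> 'a \<Rightarrow> real"
    and T :: nat and L_pi :: real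
  assumes d0_nonneg: "\<And>s. d0 s \<ge> 0" and d0_sum: "(\<Sum>s\<in>UNIV. d0 s) = 1"
    and P_nonneg: "\<And>s a s'. P s a s' \<ge> 0"
    and P_sum: "\<And>s a. (\<Sum>s'\<in>UNIV. P s a s') = 1"
    and pi_pos: "\<And>\<theta> s a. \<pi> \<theta> s a > 0"
    and pi_sum: "\<And>\<theta> s. (\<Sum>a\<in>UNIV. \<pi> \<theta> s a) = 1"
    and pi_diff: "\<And>\<theta> s a. (\<lambda>\<theta>'. \<pi> \<theta>' s a) differentiable (at \<theta>)"
    and score_bound: "\<And>\<theta> s a g. ((\<lambda>\<theta>'. ln (\<pi> \<theta>' s a)) has_derivative (\<lambda>h. g \<bullet> h)) (at \<theta>)
                        \<Longrightarrow> norm g \<le> L_pi"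
  shows "\<exists>L_d. \<forall>s \<theta>. \<exists>g.
           ((\<lambda>\<theta>'. \<Sum>t=1..T-1. state_dist d0 P (\<pi> \<theta>') t s) has_derivative (\<lambda>h. g \<bullet> h)) (at \<theta>)
           \<and> norm g \<le> L_d"
proof (intro exI[of _ "\<Sum>t=1..T-1. real t * L_pi"] allI)
  fix s :: 's and \<theta> :: "real ^ 'n"
  have "\<forall>s a. \<exists>g. ((\<lambda>\<theta>'. \<pi> \<theta>' s a) has_derivative (\<lambda>h. g \<bullet> h)) (at \<theta>)"
    using differentiable_imp_has_gradient[OF pi_diff] by metis
  then obtain dp where dp: "\<And>s a. ((\<lambda>\<theta>'. \<pi> \<theta>' s a) has_derivative (\<lambda>h. dp s a \<bullet> h)) (at \<theta>)"
    by metis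
  have dp_bound: "norm (dp s a) \<le> \<pi> \<theta> s a * L_pi" for s a
    using pi_pos dp score_bound by (rule norm_gradient_le_of_log_gradient_bound)
  let ?G = "\<lambda>t. state_dist_grad d0 P (\<pi> \<theta>) dp t s"
  have G_bound: "norm (?G t) \<le> t * L_pi" for t
  proof -
    have "norm (?G t) \<le> (\<Sum>s'\<in>UNIV. norm (state_dist_grad d0 P (\<pi> \<theta>) dp t s'))"
      by (rule member_le_sum) simp_all
    also have "\<dots> \<le> t * L_pi"
      using d0_nonneg d0_sum P_nonneg P_sum less_imp_le[OF pi_pos] pi_sum dp_bound
      by (rule sum_norm_state_dist_grad_le)
    finally show ?thesis .
  qed
  have "((\<lambda>\<theta>'. \<Sum>t=1..T-1. state_dist d0 P (\<pi> \<theta>') t s) has_derivative (\<lambda>h. (\<Sum>t=1..T-1. ?G t) \<bullet> h))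
          (at \<theta>)"
    unfolding inner_sum_left by (intro has_derivative_sum has_derivative_state_dist dp)
  moreover have "norm (\<Sum>t=1..T-1. ?G t) \<le> (\<Sum>t=1..T-1. real t * L_pi)"
    using G_bound by (intro order.trans[OF norm_sum] sum_mono)
  ultimately show "\<exists>g. ((\<lambda>\<theta>'. \<Sum>t=1..T-1. state_dist d0 P (\<pi> \<theta>') t s) has_derivative (\<lambda>h. g \<bullet> h)) (at \<theta>)
                      \<and> norm g \<le> (\<Sum>t=1..T-1. real t * L_pi)"
    by blast
qed

end
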